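(* Fix $m\ge1$ and $\rho>0$. For a partition $\kappa$ with at most $m$ parts, regarded as $(\kappa_1,\dots,\kappa_m,0,\dots,0)\in\mathbb Z^n$, let $\delta_\kappa:=\prod_{1\le i<j\le n}\frac{\kappa_i-\kappa_j+j-i}{j-i}$. If $n\to+\infty$ and $k\to+\infty$ with $n/(2k)\to\rho^{-1}$, then $$\limsup\frac1n\log\Big(\sum_{|\kappa|=2k,\ \ell(\kappa)\le m}\delta_\kappa\Big)\le m\big((1+\rho)\log(1+\rho)-\rho\log\rho\big),$$ where the sum is over partitions of $2k$ with at most $m$ nonzero parts.
   Context: $\delta_\kappa$ is the dimension of the irreducible polynomial representation $F_n^\kappa$ of $GL(n)$ with highest weight $\kappa$. $\ell(\kappa)$ is the number of nonzero parts of $\kappa$. Logarithms are natural. *)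

theory Defs
  imports "HOL-Analysis.Analysis"
begin

text \<open>Partitions of N with at most m nonzero parts, represented as weakly decreasing
  sequences kappa :: nat => nat (0-indexed: kappa 0 >= kappa 1 >= ...) with
  kappa i = 0 for i >= m and total size N.\<close>
definition partitions_le :: "nat \<Rightarrow> nat \<Rightarrow> (nat \<Rightarrow> nat) set" where
  "partitions_le m N = {\<kappa>. (\<forall>i j. i \<le> j \<longrightarrow> \<kappa> j \<le> \<kappa> i) \<and> (\<forall>i\<ge>m. \<kappa> i = 0) \<and> (\<Sum>i<m. \<kappa> i) = N}"

text \<open>Weyl dimension formula: delta_kappa for GL(n), kappa regarded as an element of Z^n
  (entries kappa 0, ..., kappa (n-1)); product over 1 <= i < j <= n, shifted to 0-indexing.\<close>
definition delta :: "nat \<Rightarrow> (nat \<Rightarrow> nat) \<Rightarrow> real" where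
  "delta n \<kappa> = (\<Prod>j<n. \<Prod>i<j. (real (\<kappa> i) - real (\<kappa> j) + real j - real i) / (real j - real i))"

end

theory Submission
  imports Defs
begin

(* With N = |kappa|, every factor (kappa_i - kappa_j + j - i) / (j - i) of delta_kappa lies between
  1 and 1 + N / (j - i), and it is 1 when i, j >= m. So the columns j < m contribute at most
  (N + 1)^(m^2), while in column m + s only the m factors with i < m matter, each at most
  1 + N / (s + 1); since prod_{s < n} (1 + N / (s + 1)) = C(N + n, n), this gives
  delta_kappa <= (N + 1)^(m^2) C(N + n, n)^m. There are at most (N + 1)^m partitions, and
  ln C(n + N, n) <= n h(N / n) with h x = (1 + x) ln (1 + x) - x ln x, because a single term
  of the binomial expansion of (x + (1 - x))^(n + N) is at most 1. After dividing by n the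
  polynomial factors disappear and h(2k / n) tends to h(rho). *)

definition binomial_exponent :: "real \<Rightarrow> real" where
  "binomial_exponent x = (1 + x) * ln (1 + x) - x * ln x"

lemma binomial_mult_powers_le_one:
  fixes x :: real
  assumes "0 \<le> x" "x \<le> 1"
  shows "real (n choose k) * x ^ k * (1 - x) ^ (n - k) \<le> 1"
proof (cases "k \<le> n")
  case True
  have "real (n choose k) * x ^ k * (1 - x) ^ (n - k)
      \<le> (\<Sum>i\<le>n. real (n choose i) * x ^ i * (1 - x) ^ (n - i))"
    using assms True by (intro member_le_sum) auto
  also have "\<dots> = (x + (1 - x)) ^ n" by (rule binomial_ring[symmetric])
  finally show ?thesis by simp
qed (simp add: binomial_eq_0)

lemma ln_binomial_le_binomial_exponent:
  assumes "0 < a" "0 < b"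
  shows "ln (real ((a + b) choose a)) \<le> real a * binomial_exponent (real b / real a)"
proof -
  define x where "x = real a / real (a + b)"
  have x: "0 < x" "x < 1" "1 - x = real b / real (a + b)"
    using assms by (auto simp: x_def field_simps)
  have "real ((a + b) choose a) * x ^ a * (1 - x) ^ b \<le> 1"
    using binomial_mult_powers_le_one[of x "a + b" a] x by simp
  then have "ln (real ((a + b) choose a) * x ^ a * (1 - x) ^ b) \<le> 0"
    using x(1,2) by simp
  then have "ln (real ((a + b) choose a)) + real a * ln x + real b * ln (1 - x) \<le> 0"
    using x(1,2) by (simp add: ln_mult ln_realpow)
  moreover have "real a * binomial_exponent (real b / real a) = - real a * ln x - real b * ln (1 - x)"
  proof -
    have ln_ratios: "ln (1 + real b / real a) = - ln x" "ln (real b / real a) = ln (1 - x) - ln x"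
      using assms x by (simp_all add: x_def ln_div field_simps)
    show ?thesis
      unfolding binomial_exponent_def ln_ratios using assms by (simp add: field_simps)
  qed
  ultimately show ?thesis by simp
qed

lemma binomial_eq_prod: "real ((N + r) choose r) = (\<Prod>s<r. 1 + real N / real (Suc s))"
proof (induction r)
  case (Suc r)
  have "real (Suc r) * real (Suc (N + r) choose Suc r) = real (Suc (N + r)) * real ((N + r) choose r)"
    using Suc_times_binomial[of r "N + r"] by (metis of_nat_mult)
  then have "real ((N + Suc r) choose Suc r) = real ((N + r) choose r) * (1 + real N / real (Suc r))"
    by (simp add: field_simps)
  with Suc show ?case by simp
qed simp

lemma binomial_add_mono:
  assumes "r \<le> n"
  shows "(N + r) choose r \<le> (N + n) choose n"
proof -
  have "(\<Prod>s<r. 1 + real N / real (Suc s)) \<le> (\<Prod>s<n. 1 + real N / real (Suc s))"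
    using assms by (intro prod_mono2) auto
  then have "real ((N + r) choose r) \<le> real ((N + n) choose n)"
    by (simp only: binomial_eq_prod)
  then show ?thesis by simp
qed

definition weyl_factor :: "(nat \<Rightarrow> nat) \<Rightarrow> nat \<Rightarrow> nat \<Rightarrow> real" where
  "weyl_factor \<kappa> i j = (real (\<kappa> i) - real (\<kappa> j) + real j - real i) / (real j - real i)"

lemma delta_eq_prod_weyl_factor: "delta n \<kappa> = (\<Prod>j<n. \<Prod>i<j. weyl_factor \<kappa> i j)"
  by (simp add: delta_def weyl_factor_def)

lemma weyl_factor_eq:
  assumes "i < j"
  shows "weyl_factor \<kappa> i j = 1 + (real (\<kappa> i) - real (\<kappa> j)) / (real j - real i)"
  using assms by (simp add: weyl_factor_def field_simps)

lemma weyl_factor_ge_one: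
  assumes "antimono \<kappa>" "i < j"
  shows "1 \<le> weyl_factor \<kappa> i j"
  using assms antimonoD[OF assms(1), of i j] by (simp add: weyl_factor_eq)

lemma weyl_factor_le:
  assumes "i < j" "\<kappa> i \<le> N" "0 < d" "d \<le> real j - real i"
  shows "weyl_factor \<kappa> i j \<le> 1 + real N / d"
proof -
  have "(real (\<kappa> i) - real (\<kappa> j)) / (real j - real i) \<le> real (\<kappa> i) / (real j - real i)"
    using assms by (intro divide_right_mono) auto
  also have "\<dots> \<le> real N / d"
    using assms by (intro frac_le) auto
  finally show ?thesis using assms(1) by (simp add: weyl_factor_eq)
qed

lemma weyl_factor_eq_one: "\<kappa> i = \<kappa> j \<Longrightarrow> i < j \<Longrightarrow> weyl_factor \<kappa> i j = 1"
  by (simp add: weyl_factor_eq)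

lemma partitions_leD:
  assumes "\<kappa> \<in> partitions_le m N"
  shows partitions_le_antimono: "antimono \<kappa>"
    and partitions_le_vanish: "\<And>i. m \<le> i \<Longrightarrow> \<kappa> i = 0"
    and partitions_le_part_le: "\<And>i. \<kappa> i \<le> N"
proof -
  show "antimono \<kappa>" "\<And>i. m \<le> i \<Longrightarrow> \<kappa> i = 0"
    using assms by (auto simp: partitions_le_def antimono_def)
  fix i
  show "\<kappa> i \<le> N"
  proof (cases "i < m")
    case True
    then have "\<kappa> i \<le> (\<Sum>i<m. \<kappa> i)" by (intro member_le_sum) auto
    with assms show ?thesis by (simp add: partitions_le_def)
  qed (use assms in \<open>simp add: partitions_le_def\<close>)
qed

lemma one_row_partition_in_partitions_le:
  "1 \<le> m \<Longrightarrow> (\<lambda>i. if i = 0 then N else 0) \<in> partitions_le m N"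
  by (auto simp: partitions_le_def sum.delta)

lemma partitions_le_restrict:
  "inj_on (\<lambda>\<kappa>. restrict \<kappa> {..<m}) (partitions_le m N)"
  "(\<lambda>\<kappa>. restrict \<kappa> {..<m}) ` partitions_le m N \<subseteq> {..<m} \<rightarrow>\<^sub>E {..N}"
proof -
  show "inj_on (\<lambda>\<kappa>. restrict \<kappa> {..<m}) (partitions_le m N)"
  proof (rule inj_onI, rule ext)
    fix \<kappa> \<mu> i
    assume partitions: "\<kappa> \<in> partitions_le m N" "\<mu> \<in> partitions_le m N"
      and restrict_eq: "restrict \<kappa> {..<m} = restrict \<mu> {..<m}"
    show "\<kappa> i = \<mu> i"
    proof (cases "i < m")
      case True
      with fun_cong[OF restrict_eq, of i] show ?thesis by simp
    qed (simp add: partitions_le_vanish[OF partitions(1)] partitions_le_vanish[OF partitions(2)])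
  qed
  show "(\<lambda>\<kappa>. restrict \<kappa> {..<m}) ` partitions_le m N \<subseteq> {..<m} \<rightarrow>\<^sub>E {..N}"
    using partitions_le_part_le by (auto simp: PiE_def extensional_def)
qed

lemma finite_partitions_le: "finite (partitions_le m N)"
proof -
  have "finite ((\<lambda>\<kappa>. restrict \<kappa> {..<m}) ` partitions_le m N)"
    using partitions_le_restrict(2) by (rule finite_subset) (simp add: finite_PiE)
  then show ?thesis using partitions_le_restrict(1) by (rule finite_imageD)
qed

lemma card_partitions_le: "card (partitions_le m N) \<le> (N + 1) ^ m"
proof -
  have "card (partitions_le m N) \<le> card ({..<m} \<rightarrow>\<^sub>E {..N})"
    using partitions_le_restrict by (rule card_inj_on_le) (simp add: finite_PiE)
  then show ?thesis by (simp add: card_PiE)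
qed

lemma prod_lessThan_add:
  fixes g :: "nat \<Rightarrow> 'a::comm_monoid_mult"
  shows "(\<Prod>j<m + r. g j) = (\<Prod>j<m. g j) * (\<Prod>s<r. g (m + s))"
  using prod.atLeastLessThan_concat[of 0 m "m + r" g]
  by (simp add: prod.atLeastLessThan_shift_0[of g m] atLeast0LessThan comp_def)

lemma delta_ge_one: "antimono \<kappa> \<Longrightarrow> 1 \<le> delta n \<kappa>"
  unfolding delta_eq_prod_weyl_factor by (intro prod_ge_1) (auto intro: weyl_factor_ge_one)

lemma prod_weyl_factor_nonneg: "antimono \<kappa> \<Longrightarrow> 0 \<le> (\<Prod>i<j. weyl_factor \<kappa> i j)"
  using weyl_factor_ge_one by (intro prod_nonneg) (fastforce intro: order_trans[OF zero_le_one])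

lemma prod_weyl_factor_le_head:
  assumes "\<kappa> \<in> partitions_le m N" "j \<le> m"
  shows "(\<Prod>i<j. weyl_factor \<kappa> i j) \<le> (real N + 1) ^ m"
proof (rule prod_le_power)
  fix i assume "i \<in> {..<j}"
  then show "0 \<le> weyl_factor \<kappa> i j \<and> weyl_factor \<kappa> i j \<le> real N + 1"
    using weyl_factor_ge_one[OF partitions_le_antimono[OF assms(1)], of i j]
      weyl_factor_le[of i j \<kappa> N 1, OF _ partitions_le_part_le[OF assms(1)]]
    by auto
qed (use assms in auto)

(* Factors with both indices at least m equal 1, and the others have j - i > s. *)
lemma prod_weyl_factor_le_tail:
  assumes "\<kappa> \<in> partitions_le m N"
  shows "(\<Prod>i<m + s. weyl_factor \<kappa> i (m + s)) \<le> (1 + real N / real (Suc s)) ^ m"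
proof -
  have "(\<Prod>r<s. weyl_factor \<kappa> (m + r) (m + s)) = 1"
    using partitions_le_vanish[OF assms] by (intro prod.neutral) (simp add: weyl_factor_eq_one)
  moreover have "(\<Prod>i<m. weyl_factor \<kappa> i (m + s)) \<le> (1 + real N / real (Suc s)) ^ m"
  proof (rule prod_le_power)
    fix i assume "i \<in> {..<m}"
    then show "0 \<le> weyl_factor \<kappa> i (m + s) \<and> weyl_factor \<kappa> i (m + s) \<le> 1 + real N / real (Suc s)"
      using weyl_factor_ge_one[OF partitions_le_antimono[OF assms], of i "m + s"]
        weyl_factor_le[of i "m + s" \<kappa> N "real (Suc s)", OF _ partitions_le_part_le[OF assms]]
      by auto
  qed auto
  ultimately show ?thesis by (simp add: prod_lessThan_add)
qed

lemma delta_le: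
  assumes "\<kappa> \<in> partitions_le m N" "m \<le> n"
  shows "delta n \<kappa> \<le> (real N + 1) ^ (m * m) * real ((N + n) choose n) ^ m"
proof -
  define column where "column j = (\<Prod>i<j. weyl_factor \<kappa> i j)" for j
  have column_nonneg: "0 \<le> column j" for j
    unfolding column_def using partitions_le_antimono[OF assms(1)] by (rule prod_weyl_factor_nonneg)
  have "(\<Prod>j<m. column j) \<le> ((real N + 1) ^ m) ^ m"
    unfolding column_def using prod_weyl_factor_le_head[OF assms(1)]
    by (intro prod_le_power) (auto intro: prod_weyl_factor_nonneg partitions_le_antimono[OF assms(1)])
  then have upper: "(\<Prod>j<m. column j) \<le> (real N + 1) ^ (m * m)"
    by (simp add: power_mult)
  have "(\<Prod>s<n - m. column (m + s)) \<le> (\<Prod>s<n - m. (1 + real N / real (Suc s)) ^ m)"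
    unfolding column_def using prod_weyl_factor_le_tail[OF assms(1)]
    by (intro prod_mono) (auto intro: prod_weyl_factor_nonneg partitions_le_antimono[OF assms(1)])
  also have "\<dots> = real ((N + (n - m)) choose (n - m)) ^ m"
    by (simp add: binomial_eq_prod prod_power_distrib)
  also have "\<dots> \<le> real ((N + n) choose n) ^ m"
    by (intro power_mono) (simp_all add: binomial_add_mono)
  finally have lower: "(\<Prod>s<n - m. column (m + s)) \<le> real ((N + n) choose n) ^ m" .
  have "delta n \<kappa> = (\<Prod>j<m. column j) * (\<Prod>s<n - m. column (m + s))"
    using prod_lessThan_add[of column m "n - m"] assms(2)
    by (simp add: delta_eq_prod_weyl_factor column_def)
  also have "\<dots> \<le> (real N + 1) ^ (m * m) * real ((N + n) choose n) ^ m"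
    using upper lower column_nonneg by (intro mult_mono) (auto intro: prod_nonneg)
  finally show ?thesis .
qed

lemma ln_sum_delta_le:
  assumes "1 \<le> m" "m \<le> n" "0 < N"
  shows "ln (\<Sum>\<kappa>\<in>partitions_le m N. delta n \<kappa>) / real n
    \<le> real (m + m * m) * (ln (real N + 1) / real n) + real m * binomial_exponent (real N / real n)"
proof -
  let ?S = "\<Sum>\<kappa>\<in>partitions_le m N. delta n \<kappa>"
  let ?C = "real ((N + n) choose n)"
  have delta_ge_one_on_partitions: "1 \<le> delta n \<kappa>" if "\<kappa> \<in> partitions_le m N" for \<kappa>
    using that by (intro delta_ge_one partitions_le_antimono)
  have one_row: "(\<lambda>i. if i = 0 then N else 0) \<in> partitions_le m N"
    using assms(1) by (rule one_row_partition_in_partitions_le)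
  have "1 \<le> delta n (\<lambda>i. if i = 0 then N else 0)"
    using one_row by (rule delta_ge_one_on_partitions)
  also have "\<dots> \<le> ?S"
    using one_row delta_ge_one_on_partitions by (intro member_le_sum finite_partitions_le) (auto intro: order_trans[OF zero_le_one])
  finally have S_ge_one: "1 \<le> ?S" .
  have "?S \<le> real (card (partitions_le m N)) * ((real N + 1) ^ (m * m) * ?C ^ m)"
    using delta_le[OF _ assms(2)] by (rule sum_bounded_above)
  also have "\<dots> \<le> real ((N + 1) ^ m) * ((real N + 1) ^ (m * m) * ?C ^ m)"
    by (intro mult_right_mono) (simp_all only: of_nat_le_iff card_partitions_le, simp)
  finally have "?S \<le> (real N + 1) ^ (m + m * m) * ?C ^ m"
    by (simp add: power_add mult.assoc add.commute)
  then have "ln ?S \<le> ln ((real N + 1) ^ (m + m * m) * ?C ^ m)"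
    using S_ge_one by (subst ln_le_cancel_iff) auto
  also have "\<dots> = real (m + m * m) * ln (real N + 1) + real m * ln ?C"
    by (simp add: ln_mult ln_realpow)
  also have "ln ?C \<le> real n * binomial_exponent (real N / real n)"
    using ln_binomial_le_binomial_exponent[of n N] assms by (simp add: add.commute)
  finally show ?thesis
    using assms by (simp add: divide_simps mult_ac)
qed

lemma ln_over_tendsto_zero:
  fixes a b :: "'a \<Rightarrow> real"
  assumes "filterlim a at_top F" "filterlim b at_top F" "((\<lambda>t. b t / a t) \<longlongrightarrow> c) F"
  shows "((\<lambda>t. ln (b t + 1) / a t) \<longlongrightarrow> 0) F"
proof -
  have b_plus_one: "filterlim (\<lambda>t. b t + 1) at_top F"
    by (rule filterlim_at_top_mono[OF assms(2)]) simp
  have "((\<lambda>t. b t / a t + inverse (a t)) \<longlongrightarrow> c + 0) F"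
    by (intro tendsto_add assms(3) tendsto_inverse_0_at_top assms(1))
  then have "((\<lambda>t. (b t + 1) / a t) \<longlongrightarrow> c) F"
    by (simp add: add_divide_distrib inverse_eq_divide)
  moreover have "((\<lambda>t. ln (b t + 1) / (b t + 1)) \<longlongrightarrow> 0) F"
    using b_plus_one by (rule filterlim_compose[OF ln_x_over_x_tendsto_0])
  ultimately have "((\<lambda>t. ln (b t + 1) / (b t + 1) * ((b t + 1) / a t)) \<longlongrightarrow> 0 * c) F"
    by (intro tendsto_mult)
  then have "((\<lambda>t. ln (b t + 1) / (b t + 1) * ((b t + 1) / a t)) \<longlongrightarrow> 0) F"
    by (simp only: mult_zero_left)
  moreover have "\<forall>\<^sub>F t in F. 0 < b t + 1"
    using b_plus_one by (simp add: filterlim_at_top_dense)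
  then have "\<forall>\<^sub>F t in F. ln (b t + 1) / (b t + 1) * ((b t + 1) / a t) = ln (b t + 1) / a t"
    by (rule eventually_mono) simp
  ultimately show ?thesis by (rule Lim_transform_eventually)
qed

theorem lemma6p1:
  fixes m :: nat and \<rho> :: real and nn kk :: "nat \<Rightarrow> nat"
  assumes "m \<ge> 1" and "\<rho> > 0"
    and "filterlim nn at_top sequentially"
    and "filterlim kk at_top sequentially"
    and "(\<lambda>t. real (nn t) / (2 * real (kk t))) \<longlonglongrightarrow> 1 / \<rho>"
  shows "limsup (\<lambda>t. ereal (ln (\<Sum>\<kappa>\<in>partitions_le m (2 * kk t). delta (nn t) \<kappa>) / real (nn t)))
           \<le> ereal (real m * ((1 + \<rho>) * ln (1 + \<rho>) - \<rho> * ln \<rho>))"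
proof -
  define bound where "bound t = real (m + m * m) * (ln (real (2 * kk t) + 1) / real (nn t))
    + real m * binomial_exponent (real (2 * kk t) / real (nn t))" for t
  have ratio: "(\<lambda>t. real (2 * kk t) / real (nn t)) \<longlonglongrightarrow> \<rho>"
    using tendsto_inverse[OF assms(5)] assms(2) by simp
  have "(\<lambda>t. ln (real (2 * kk t) + 1) / real (nn t)) \<longlonglongrightarrow> 0"
    using ratio filterlim_real_sequentially assms(3,4)
    by (intro ln_over_tendsto_zero) (auto intro: filterlim_compose filterlim_tendsto_pos_mult_at_top)
  then have "bound \<longlonglongrightarrow> real (m + m * m) * 0 + real m * binomial_exponent \<rho>"
    unfolding bound_def binomial_exponent_def using ratio assms(2)
    by (intro tendsto_intros) auto
  then have bound_limsup: "limsup (\<lambda>t. ereal (bound t)) = ereal (real m * binomial_exponent \<rho>)"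
    by (intro lim_imp_Limsup) (auto intro: tendsto_ereal)
  have "\<forall>\<^sub>F t in sequentially. m \<le> nn t \<and> 1 \<le> kk t"
    using assms(3,4) by (intro eventually_conj) (simp_all add: filterlim_at_top)
  then have "\<forall>\<^sub>F t in sequentially.
      ereal (ln (\<Sum>\<kappa>\<in>partitions_le m (2 * kk t). delta (nn t) \<kappa>) / real (nn t)) \<le> ereal (bound t)"
  proof (rule eventually_mono)
    fix t assume "m \<le> nn t \<and> 1 \<le> kk t"
    then show "ereal (ln (\<Sum>\<kappa>\<in>partitions_le m (2 * kk t). delta (nn t) \<kappa>) / real (nn t)) \<le> ereal (bound t)"
      unfolding ereal_less_eq bound_def using assms(1) by (intro ln_sum_delta_le) auto
  qed
  then have "limsup (\<lambda>t. ereal (ln (\<Sum>\<kappa>\<in>partitions_le m (2 * kk t). delta (nn t) \<kappa>) / real (nn t)))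
      \<le> limsup (\<lambda>t. ereal (bound t))"
    by (rule Limsup_mono)
  then show ?thesis
    unfolding bound_limsup by (simp add: binomial_exponent_def)
qed

end
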